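(* Let $X_1,X_2,\dots$ be i.i.d. standard normal random variables and $\{Y_{ij}\}_{1\le i<j}$ i.i.d. standard normal random variables independent of the $X_i$. Let $c_n:=\sqrt{2\log n}$, $d_n:=\sqrt{2\log n}-\frac{\log\log n+\log(4\pi)}{2\sqrt{2\log n}}$, $Z_i:=c_n(X_i-d_n)$ for $1\le i\le n$, and $Z_{(1)}\ge\dots\ge Z_{(n)}$ the order statistics of $Z_1,\dots,Z_n$. Fix $c>0$. Then for every $\varepsilon>0$ there exists $C_\varepsilon>0$ such that for all integers $K\ge C_\varepsilon$, $$\liminf_{n\to\infty}\mathbb{P}\left(\operatorname*{argmax}_{(i,j):1\le i<j\le n}\left\{\frac{Z_{(i)}+Z_{(j)}}{\sqrt2}+cY_{ij}\right\}\in[K]\times[K]\right)\ge1-\varepsilon,$$ where $[K]=\{1,2,\dots,K\}$. *)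

theory Defs
  imports "HOL-Probability.Probability"
begin

definition cn :: "nat \<Rightarrow> real" where
  "cn n = sqrt (2 * ln (real n))"

definition dn :: "nat \<Rightarrow> real" where
  "dn n = sqrt (2 * ln (real n)) - (ln (ln (real n)) + ln (4 * pi)) / (2 * sqrt (2 * ln (real n)))"

definition ord_stat :: "(nat \<Rightarrow> real) \<Rightarrow> nat \<Rightarrow> nat \<Rightarrow> real" where
  "ord_stat z n k = rev (sort (map z [1..<n+1])) ! (k - 1)"

definition pairs :: "nat \<Rightarrow> (nat \<times> nat) set" where
  "pairs n = {(i, j). 1 \<le> i \<and> i < j \<and> j \<le> n}"

definition argmax_in :: "(nat \<Rightarrow> nat \<Rightarrow> real) \<Rightarrow> nat \<Rightarrow> nat \<Rightarrow> bool" where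
  "argmax_in W n K \<longleftrightarrow>
     (\<forall>(i, j) \<in> pairs n. W i j = Max ((\<lambda>(a, b). W a b) ` pairs n) \<longrightarrow> i \<le> K \<and> j \<le> K)"

end

theory Submission
  imports Defs "HOL-Real_Asymp.Real_Asymp" "HOL-Library.Discrete_Functions"
begin

(*
  Write Q for the standard Gaussian tail. The constants c_n, d_n are chosen so that, for
  large n, n Q(d_n - t/c_n) is at most 2 e^t uniformly in 0 <= t <= (log n)/2, and at
  least e^(t - 7/2) for each fixed t >= 0. Hence, for a fixed a, with high probability at
  least two of the Z_l exceed -a, so that Z_(1) + Z_(2) > Z_(1) - a. By Markov's inequality
  on each dyadic scale 2^k ~ K, with probability 1 - O(K^(-1/2)) fewer than 2^k of the Z_l
  exceed -k (log 2)/2, so that Z_(j) <= -(log j)/2 + O(1) for every j > K. A pair (i, j)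
  with j > K can therefore beat the pair (1, 2) only if c Y_ij exceeds
  c Y_12 + (log j)/(2 sqrt 2) - O(1); a union bound over the j - 1 pairs with larger index j
  gives a tail of order 1/j^2, whose sum over j > K is O(1/K).
*)

section \<open>The Gaussian tail\<close>

definition normal_tail :: "real \<Rightarrow> real" where
  "normal_tail x = measure (density lborel std_normal_density) {x<..}"

lemma normal_tail_nonneg: "0 \<le> normal_tail x"
  by (simp add: normal_tail_def)

lemma ennreal_normal_tail:
  "ennreal (normal_tail x) = (\<integral>\<^sup>+u. ennreal (std_normal_density u) * indicator {x<..} u \<partial>lborel)"
proof -
  interpret prob_space "density lborel std_normal_density"
    by (rule prob_space_normal_density) simp
  show ?thesis
    unfolding normal_tail_def emeasure_eq_measure[symmetric] by (rule emeasure_density) auto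
qed

lemma DERIV_std_normal_density:
  "(std_normal_density has_real_derivative - u * std_normal_density u) (at u)"
  unfolding std_normal_density_def
  by (auto intro!: derivative_eq_intros simp: field_simps power2_eq_square)

lemma std_normal_density_antimono:
  assumes "0 \<le> u" "u \<le> v"
  shows "std_normal_density v \<le> std_normal_density u"
proof -
  have "u\<^sup>2 \<le> v\<^sup>2"
    using assms by (simp add: power_mono)
  then show ?thesis
    unfolding std_normal_density_def by (intro mult_left_mono) auto
qed

lemma normal_tail_le:
  assumes "0 < x"
  shows "normal_tail x \<le> std_normal_density x / x"
proof -
  have "ennreal (normal_tail x)
      \<le> (\<integral>\<^sup>+u. ennreal (u * std_normal_density u / x) * indicator {x..} u \<partial>lborel)"
    unfolding ennreal_normal_tail
  proof (intro nn_integral_mono)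
    fix u :: real
    have "x < u \<Longrightarrow> std_normal_density u \<le> u * std_normal_density u / x"
      using assms by (simp add: field_simps mult_right_mono)
    then show "ennreal (std_normal_density u) * indicator {x<..} u
             \<le> ennreal (u * std_normal_density u / x) * indicator {x..} u"
      by (auto simp: indicator_def intro: ennreal_leI)
  qed
  also have "\<dots> = ennreal (0 - (- std_normal_density x / x))"
  proof (rule nn_integral_FTC_atLeast[where F = "\<lambda>u. - std_normal_density u / x" and T = 0])
    show "((\<lambda>u. - std_normal_density u / x) has_real_derivative u * std_normal_density u / x) (at u)"
      if "x \<le> u" for u
      using DERIV_std_normal_density[of u] assms
      by (auto intro!: derivative_eq_intros simp: field_simps)
    have "((\<lambda>u. exp (- u\<^sup>2 / 2) :: real) \<longlongrightarrow> 0) at_top"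
      by real_asymp
    then have "((\<lambda>u. - (1 / sqrt (2 * pi) * exp (- u\<^sup>2 / 2)) / x) \<longlongrightarrow> - (1 / sqrt (2 * pi) * 0) / x) at_top"
      using assms by (intro tendsto_intros) auto
    then show "((\<lambda>u. - std_normal_density u / x) \<longlongrightarrow> 0) at_top"
      unfolding std_normal_density_def by simp
  qed (use assms in auto)
  finally show ?thesis
    using assms by (simp add: ennreal_le_iff normal_density_nonneg)
qed

lemma normal_tail_ge:
  assumes "1 \<le> x"
  shows "std_normal_density x / (x * exp (3/2)) \<le> normal_tail x"
proof -
  have x: "0 < x"
    using assms by simp
  have "std_normal_density x / (x * exp (3/2)) = std_normal_density x / x * exp (- 3/2)"
    by (simp add: exp_minus field_simps)
  also have "\<dots> \<le> std_normal_density x / x * exp (-1 - 1 / (2 * x\<^sup>2))"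
  proof -
    have "1 / (2 * x\<^sup>2) \<le> 1 / 2"
      using assms by (simp add: field_simps)
    then have "exp (- 3/2) \<le> exp (-1 - 1 / (2 * x\<^sup>2))"
      by simp
    moreover have "0 \<le> std_normal_density x / x"
      using x by (simp add: normal_density_nonneg)
    ultimately show ?thesis
      by (rule mult_left_mono)
  qed
  also have "\<dots> = (1 / x) * std_normal_density (x + 1 / x)"
    unfolding std_normal_density_def using x
    by (simp add: power2_eq_square field_simps flip: exp_add)
  finally have bound: "std_normal_density x / (x * exp (3/2)) \<le> (1 / x) * std_normal_density (x + 1 / x)" .
  \<comment> \<open>on (x, x + 1/x] the density is at least its value at the right end\<close>
  have "ennreal ((1 / x) * std_normal_density (x + 1 / x))
      = (\<integral>\<^sup>+u. ennreal (std_normal_density (x + 1 / x)) * indicator {x<..x + 1 / x} u \<partial>lborel)"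
    using x by (simp add: nn_integral_cmult_indicator normal_density_nonneg flip: ennreal_mult)
  also have "\<dots> \<le> ennreal (normal_tail x)"
    unfolding ennreal_normal_tail
  proof (intro nn_integral_mono)
    fix u :: real
    have "x < u \<Longrightarrow> u \<le> x + 1 / x \<Longrightarrow> std_normal_density (x + 1 / x) \<le> std_normal_density u"
      using x by (intro std_normal_density_antimono) auto
    then show "ennreal (std_normal_density (x + 1 / x)) * indicator {x<..x + 1 / x} u
             \<le> ennreal (std_normal_density u) * indicator {x<..} u"
      by (auto simp: indicator_def intro: ennreal_leI)
  qed
  finally show ?thesis
    using bound normal_tail_nonneg by (simp add: ennreal_le_iff)
qed

lemma normal_tail_le_exp:
  assumes "1 \<le> x"
  shows "normal_tail x \<le> exp (- x\<^sup>2 / 2)"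
proof -
  have "normal_tail x \<le> std_normal_density x / x"
    using assms by (intro normal_tail_le) auto
  also have "\<dots> \<le> std_normal_density x"
    using divide_left_mono[of 1 x "std_normal_density x"] assms normal_density_nonneg[of 0 1 x] by simp
  also have "\<dots> \<le> exp (- x\<^sup>2 / 2)"
    using pi_gt3 unfolding std_normal_density_def by (simp add: divide_le_eq)
  finally show ?thesis .
qed

lemma normal_tail_tendsto_0: "(normal_tail \<longlongrightarrow> 0) at_top"
proof (rule tendsto_sandwich[where f = "\<lambda>_. 0" and h = "\<lambda>x. exp (- x\<^sup>2 / 2)"])
  show "eventually (\<lambda>x. normal_tail x \<le> exp (- x\<^sup>2 / 2)) at_top"
    using eventually_ge_at_top[of 1] by eventually_elim (rule normal_tail_le_exp)
  show "((\<lambda>x. exp (- x\<^sup>2 / 2) :: real) \<longlongrightarrow> 0) at_top"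
    by real_asymp
qed (auto simp: normal_tail_nonneg)

section \<open>The normalising constants\<close>

lemma cn_pos: "1 < n \<Longrightarrow> 0 < cn n"
  by (simp add: cn_def)

lemma cn_squared: "1 < n \<Longrightarrow> (cn n)\<^sup>2 = 2 * ln (real n)"
  by (simp add: cn_def)

lemma dn_minus_div_cn:
  assumes "1 < n"
  shows "dn n - t / cn n = cn n - ((ln (ln (real n)) + ln (4 * pi)) / 2 + t) / cn n"
  using cn_pos[OF assms] unfolding dn_def cn_def by (simp add: field_simps)

(* The correction term of d_n is exactly what turns the prefactor n / sqrt (2 pi) into c_n. *)
lemma mult_std_normal_density_dn:
  assumes "1 < n"
  shows "real n * std_normal_density (dn n - t / cn n)
       = cn n * exp (t - ((ln (ln (real n)) + ln (4 * pi)) / 2 + t)\<^sup>2 / (4 * ln (real n)))"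
proof -
  define L where "L = ln (real n)"
  define s where "s = ln L + ln (4 * pi)"
  define u where "u = s / 2 + t"
  have L: "0 < L"
    using assms by (simp add: L_def)
  have c: "cn n = sqrt (2 * L)"
    by (simp add: cn_def L_def)
  have "dn n - t / cn n = cn n - u / cn n"
    using dn_minus_div_cn[OF assms] unfolding u_def s_def L_def .
  also have "(cn n - u / cn n)\<^sup>2 = (cn n)\<^sup>2 - 2 * u + u\<^sup>2 / (cn n)\<^sup>2"
    using cn_pos[OF assms] by (simp add: power2_diff power_divide field_simps power2_eq_square)
  finally have "(dn n - t / cn n)\<^sup>2 = 2 * L - 2 * u + u\<^sup>2 / (2 * L)"
    using cn_squared[OF assms] by (simp add: L_def)
  then have "- (dn n - t / cn n)\<^sup>2 / 2 = - L + s / 2 + (t - u\<^sup>2 / (4 * L))"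
    using L by (simp add: u_def field_simps)
  then have "exp (- (dn n - t / cn n)\<^sup>2 / 2) = exp (- L) * exp (s / 2) * exp (t - u\<^sup>2 / (4 * L))"
    by (simp only: exp_add)
  then have "std_normal_density (dn n - t / cn n)
           = exp (- L) * exp (s / 2) / sqrt (2 * pi) * exp (t - u\<^sup>2 / (4 * L))"
    unfolding std_normal_density_def by simp
  moreover have "exp (- L) = 1 / real n"
    using assms by (simp add: L_def exp_minus inverse_eq_divide)
  moreover have "exp (s / 2) = sqrt (4 * pi * L)"
  proof (rule real_sqrt_unique[symmetric])
    show "(exp (s / 2))\<^sup>2 = 4 * pi * L"
      using L by (simp add: s_def power2_eq_square exp_add flip: exp_add) (simp add: exp_add)
  qed simp
  ultimately have "real n * std_normal_density (dn n - t / cn n)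
      = sqrt (4 * pi * L) / sqrt (2 * pi) * exp (t - u\<^sup>2 / (4 * L))"
    using assms by simp
  also have "sqrt (4 * pi * L) / sqrt (2 * pi) = cn n"
    unfolding c by (simp flip: real_sqrt_divide)
  finally show ?thesis
    by (simp add: u_def s_def L_def)
qed

lemma eventually_mult_normal_tail_dn_le:
  "eventually (\<lambda>n. \<forall>t. 0 \<le> t \<longrightarrow> t \<le> ln (real n) / 2 \<longrightarrow>
      real n * normal_tail (dn n - t / cn n) \<le> 2 * exp t) sequentially"
proof -
  have "eventually (\<lambda>n::nat. ln (ln (real n)) + ln (4 * pi) \<le> ln (real n)) sequentially"
    by real_asymp
  with eventually_gt_at_top[of 1] show ?thesis
  proof eventually_elim
    case (elim n)
    show ?case
    proof (intro allI impI)
      fix t :: real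
      assume t: "0 \<le> t" "t \<le> ln (real n) / 2"
      define u where "u = (ln (ln (real n)) + ln (4 * pi)) / 2 + t"
      define x where "x = dn n - t / cn n"
      have c: "0 < cn n" "(cn n)\<^sup>2 = 2 * ln (real n)"
        using elim cn_pos cn_squared by auto
      have "u / cn n \<le> cn n / 2"
        using elim t c by (simp add: u_def field_simps power2_eq_square)
      then have x: "cn n / 2 \<le> x"
        using dn_minus_div_cn[OF elim(1)] by (simp add: x_def u_def)
      have "real n * normal_tail x \<le> real n * std_normal_density x / x"
        using normal_tail_le[of x] x c by (simp add: mult_left_mono flip: times_divide_eq_right)
      also have "\<dots> \<le> real n * std_normal_density x / (cn n / 2)"
        using x c by (intro divide_left_mono) (auto simp: normal_density_nonneg)
      also have "\<dots> = 2 * exp (t - u\<^sup>2 / (4 * ln (real n)))"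
        using mult_std_normal_density_dn[OF elim(1)] c by (simp add: x_def u_def)
      also have "\<dots> \<le> 2 * exp t"
        using elim by simp
      finally show "real n * normal_tail (dn n - t / cn n) \<le> 2 * exp t"
        by (simp add: x_def)
    qed
  qed
qed

lemma eventually_mult_normal_tail_dn_ge:
  assumes "0 \<le> a"
  shows "eventually (\<lambda>n. exp (a - 7/2) \<le> real n * normal_tail (dn n - a / cn n)) sequentially"
proof -
  have "eventually (\<lambda>n::nat. 0 \<le> ln (ln (real n)) + ln (4 * pi)) sequentially"
    by real_asymp
  moreover have "eventually (\<lambda>n::nat. ((ln (ln (real n)) + ln (4 * pi)) / 2 + a)\<^sup>2 \<le> 8 * ln (real n))
      sequentially"
    by real_asymp
  moreover have "eventually (\<lambda>n. 1 \<le> dn n - a / cn n) sequentially"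
    unfolding dn_def cn_def by real_asymp
  ultimately show ?thesis
    using eventually_gt_at_top[of 1]
  proof eventually_elim
    case (elim n)
    define u where "u = (ln (ln (real n)) + ln (4 * pi)) / 2 + a"
    define x where "x = dn n - a / cn n"
    have c: "0 < cn n"
      using elim cn_pos by auto
    have x: "1 \<le> x" "x \<le> cn n"
      using elim dn_minus_div_cn[OF elim(4)] c assms by (auto simp: x_def)
    have "exp (a - 7/2) \<le> exp (a - u\<^sup>2 / (4 * ln (real n))) / exp (3/2)"
      using elim by (simp add: u_def exp_diff[symmetric] field_simps)
    also have "\<dots> = real n * std_normal_density x / (cn n * exp (3/2))"
      using mult_std_normal_density_dn[OF elim(4)] c by (simp add: x_def u_def)
    also have "\<dots> \<le> real n * std_normal_density x / (x * exp (3/2))"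
      using x by (intro divide_left_mono mult_right_mono) (auto simp: normal_density_nonneg)
    also have "\<dots> \<le> real n * normal_tail x"
      using normal_tail_ge[OF x(1)] by (simp add: mult_left_mono flip: times_divide_eq_right)
    finally show ?case
      by (simp add: x_def)
  qed
qed

section \<open>Order statistics and the argmax\<close>

lemma less_nth_sorted_wrt_ge_iff:
  fixes xs :: "real list"
  assumes "sorted_wrt (\<ge>) xs" "i < length xs"
  shows "t < xs ! i \<longleftrightarrow> i < length (filter (\<lambda>v. t < v) xs)"
  using assms
proof (induction xs arbitrary: i)
  case (Cons a xs)
  have below: "\<forall>v\<in>set xs. v \<le> a"
    using Cons.prems(1) by simp
  show ?case
  proof (cases "t < a")
    case True
    then show ?thesis
      using Cons by (cases i) auto
  next
    case False
    have "filter (\<lambda>v. t < v) xs = []"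
      using False below by (auto simp: filter_empty_conv)
    moreover have "\<not> t < (a # xs) ! i"
      using False below Cons.prems(2) by (cases i) (auto, meson nth_mem order.strict_trans2)
    ultimately show ?thesis
      using False by simp
  qed
qed simp

lemma length_filter_sort: "length (filter P (sort xs)) = length (filter P xs)"
  by (metis mset_filter mset_sort size_mset)

lemma less_ord_stat_iff:
  assumes "1 \<le> k" "k \<le> n"
  shows "t < ord_stat z n k \<longleftrightarrow> k \<le> card {l\<in>{1..n}. t < z l}"
proof -
  let ?xs = "rev (sort (map z [1..<n+1]))"
  have "length (filter (\<lambda>v. t < v) ?xs) = length (filter (\<lambda>v. t < v) (map z [1..<n+1]))"
    by (simp add: length_filter_sort flip: rev_filter)
  also have "\<dots> = length (filter (\<lambda>l. t < z l) [1..<n+1])"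
    by (simp add: filter_map o_def)
  also have "\<dots> = card {l\<in>{1..n}. t < z l}"
    by (subst distinct_card[symmetric]) (auto intro!: arg_cong[where f = card])
  finally show ?thesis
    using less_nth_sorted_wrt_ge_iff[of ?xs "k - 1" t] assms
    unfolding ord_stat_def by (auto simp: sorted_wrt_rev)
qed

lemma ord_stat_le_ord_stat_1:
  assumes "1 \<le> i" "i \<le> n"
  shows "ord_stat z n i \<le> ord_stat z n 1"
proof (cases "i = 1")
  case False
  let ?xs = "rev (sort (map z [1..<n+1]))"
  have "sorted_wrt (\<ge>) ?xs"
    by (simp add: sorted_wrt_rev)
  moreover have "0 < i - 1" "i - 1 < length ?xs"
    using False assms by simp_all
  ultimately have "?xs ! (i - 1) \<le> ?xs ! 0"
    by (rule sorted_wrt_nth_less)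
  then show ?thesis
    by (simp add: ord_stat_def)
qed simp

lemma finite_pairs: "finite (pairs n)"
  by (rule finite_subset[of _ "{1..n} \<times> {1..n}"]) (auto simp: pairs_def)

lemma argmax_in_iff:
  "argmax_in W n K \<longleftrightarrow> (\<forall>(i, j)\<in>pairs n. K < j \<longrightarrow> (\<exists>(i', j')\<in>pairs n. W i j < W i' j'))"
proof -
  define m where "m = Max ((\<lambda>(a, b). W a b) ` pairs n)"
  have max_iff: "W i j = m \<longleftrightarrow> (\<forall>(a, b)\<in>pairs n. W a b \<le> W i j)"
    if "(i, j) \<in> pairs n" for i j
  proof -
    have "W i j \<in> (\<lambda>(a, b). W a b) ` pairs n"
      using that by force
    then show ?thesis
      unfolding m_def using finite_pairs[of n] by (subst eq_commute, subst Max_eq_iff) auto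
  qed
  have pointwise: "(W i j = m \<longrightarrow> i \<le> K \<and> j \<le> K)
      \<longleftrightarrow> (K < j \<longrightarrow> (\<exists>(i', j')\<in>pairs n. W i j < W i' j'))"
    if ij: "(i, j) \<in> pairs n" for i j
  proof -
    have "(\<exists>(i', j')\<in>pairs n. W i j < W i' j') \<longleftrightarrow> W i j \<noteq> m"
    proof
      assume "\<exists>(i', j')\<in>pairs n. W i j < W i' j'"
      then obtain i' j' where "(i', j') \<in> pairs n" "W i j < W i' j'"
        by blast
      then show "W i j \<noteq> m"
        using max_iff[OF ij] by fastforce
    next
      assume "W i j \<noteq> m"
      then obtain i' j' where "(i', j') \<in> pairs n" "\<not> W i' j' \<le> W i j"
        using max_iff[OF ij] by blast
      then show "\<exists>(i', j')\<in>pairs n. W i j < W i' j'"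
        by (auto simp: not_le)
    qed
    moreover have "i < j"
      using ij by (simp add: pairs_def)
    ultimately show ?thesis
      by auto
  qed
  show ?thesis
    unfolding argmax_in_def m_def[symmetric]
  proof (intro ball_cong refl)
    fix p
    assume "p \<in> pairs n"
    then show "(case p of (i, j) \<Rightarrow> W i j = m \<longrightarrow> i \<le> K \<and> j \<le> K)
             = (case p of (i, j) \<Rightarrow> K < j \<longrightarrow> (\<exists>(i', j')\<in>pairs n. W i j < W i' j'))"
      by (cases p) (simp only: pointwise case_prod_conv)
  qed
qed

section \<open>Dyadic scales and the noise threshold\<close>

definition dyadic_scales :: "nat \<Rightarrow> nat \<Rightarrow> nat set" where
  "dyadic_scales n K = {k. 2 ^ k \<le> n \<and> K < 2 ^ (k + 1)}"

lemma finite_dyadic_scales: "finite (dyadic_scales n K)"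
  by (rule finite_subset[of _ "{..n}"])
     (auto simp: dyadic_scales_def intro: less_imp_le[OF order.strict_trans2[OF less_exp]])

lemma floor_log_mem_dyadic_scales:
  assumes "K < j" "j \<le> n"
  shows "floor_log j \<in> dyadic_scales n K"
proof -
  have "2 ^ floor_log j \<le> j"
    using assms by (intro floor_log_exp2_le) auto
  moreover have "j < 2 ^ (floor_log j + 1)"
    using floor_log_exp2_gt[of j] by simp
  ultimately show ?thesis
    using assms unfolding dyadic_scales_def by auto
qed

lemma argmax_in_ord_statI:
  fixes z :: "nat \<Rightarrow> real" and Y :: "nat \<Rightarrow> nat \<Rightarrow> real" and \<gamma> :: "nat \<Rightarrow> real"
  assumes "2 \<le> n"
    and two_above: "2 \<le> card {l\<in>{1..n}. - a < z l}"
    and few_above: "\<And>k. k \<in> dyadic_scales n K \<Longrightarrow> card {l\<in>{1..n}. - \<gamma> k < z l} < 2 ^ k"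
    and noise: "\<And>i j. (i, j) \<in> pairs n \<Longrightarrow> K < j \<Longrightarrow>
                  c * Y i j \<le> c * Y 1 2 + (\<gamma> (floor_log j) - a) / sqrt 2"
  shows "argmax_in (\<lambda>i j. (ord_stat z n i + ord_stat z n j) / sqrt 2 + c * Y i j) n K"
proof -
  let ?W = "\<lambda>i j. (ord_stat z n i + ord_stat z n j) / sqrt 2 + c * Y i j"
  have second: "- a < ord_stat z n 2"
    using less_ord_stat_iff[of 2 n "- a" z] two_above assms(1) by simp
  have beaten: "?W i j < ?W 1 2" if ij: "(i, j) \<in> pairs n" "K < j" for i j
  proof -
    define k where "k = floor_log j"
    have ij': "1 \<le> i" "i < j" "j \<le> n"
      using ij by (auto simp: pairs_def)
    have "card {l\<in>{1..n}. - \<gamma> k < z l} < 2 ^ k"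
      using few_above floor_log_mem_dyadic_scales[OF ij(2) ij'(3)] by (simp add: k_def)
    moreover have "2 ^ k \<le> j"
      using ij' unfolding k_def by (intro floor_log_exp2_le) auto
    ultimately have "ord_stat z n j \<le> - \<gamma> k"
      using less_ord_stat_iff[of j n "- \<gamma> k" z] ij' by (auto simp: not_less)
    moreover have "ord_stat z n i \<le> ord_stat z n 1"
      using ij' by (intro ord_stat_le_ord_stat_1) auto
    ultimately have "?W i j \<le> (ord_stat z n 1 - \<gamma> k) / sqrt 2 + (c * Y 1 2 + (\<gamma> k - a) / sqrt 2)"
      using noise[OF ij] by (intro add_mono divide_right_mono) (auto simp: k_def)
    also have "\<dots> = (ord_stat z n 1 - a) / sqrt 2 + c * Y 1 2"
      by (simp add: diff_divide_distrib algebra_simps)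
    also have "\<dots> < ?W 1 2"
      using second by (simp add: divide_strict_right_mono)
    finally show ?thesis .
  qed
  have "(1, 2) \<in> pairs n"
    using assms(1) by (simp add: pairs_def)
  with beaten show ?thesis
    unfolding argmax_in_iff by (auto intro!: bexI[of _ "(1, 2)"])
qed

definition level :: "nat \<Rightarrow> real" where
  "level k = real k * ln 2 / 2"

lemma level_nonneg: "0 \<le> level k"
  by (simp add: level_def)

lemma level_le_half_ln:
  assumes "2 ^ k \<le> n"
  shows "level k \<le> ln (real n) / 2"
proof -
  have "(2::real) ^ k \<le> real n"
    using assms by (metis of_nat_le_iff of_nat_numeral of_nat_power)
  moreover have "0 < n"
    using less_le_trans[OF _ assms, of 0] by simp
  ultimately have "ln (2 ^ k) \<le> ln (real n)"
    by (subst ln_le_cancel_iff) auto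
  then show ?thesis
    by (simp add: level_def ln_realpow)
qed

lemma exp_level: "exp (level k) = sqrt 2 ^ k"
proof -
  have "exp (ln 2 / 2) = sqrt 2"
    by (rule real_sqrt_unique[symmetric]) (auto simp: power2_eq_square simp flip: exp_add)
  moreover have "exp (level k) = exp (ln 2 / 2) ^ k"
    unfolding level_def by (simp add: exp_of_nat_mult[symmetric] mult.commute)
  ultimately show ?thesis
    by simp
qed

lemma dyadic_scales_subset:
  assumes "1 \<le> K"
  shows "dyadic_scales n K \<subseteq> {floor_log K..n}"
proof
  fix k
  assume "k \<in> dyadic_scales n K"
  then have "k < 2 ^ k" "2 ^ k \<le> n" "K < 2 ^ (k + 1)"
    by (auto simp: dyadic_scales_def less_exp)
  moreover have "2 ^ floor_log K \<le> K"
    using assms by (intro floor_log_exp2_le) auto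
  ultimately have "k \<le> n" "2 ^ floor_log K < (2::nat) ^ (k + 1)"
    by linarith+
  then show "k \<in> {floor_log K..n}"
    using power_less_imp_less_exp[of "2::nat" "floor_log K" "k + 1"] by simp
qed

lemma sum_dyadic_scales_le:
  assumes "1 \<le> K"
  shows "(\<Sum>k\<in>dyadic_scales n K. 2 * exp (level k) / 2 ^ k) \<le> 8 * sqrt (2 / K)"
proof -
  define k0 where "k0 = floor_log K"
  define q :: real where "q = 1 / sqrt 2"
  have "4 / 3 \<le> sqrt 2"
    by (rule real_le_rsqrt) (simp add: power2_eq_square)
  then have q: "0 \<le> q" "q \<le> 3 / 4"
    by (auto simp: q_def field_simps)
  have term_eq: "2 * exp (level k) / 2 ^ k = 2 * q ^ k" for k
  proof -
    have "(2::real) ^ k = sqrt 2 ^ k * sqrt 2 ^ k"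
      by (simp flip: power_mult_distrib)
    then show ?thesis
      by (simp add: exp_level q_def power_one_over)
  qed
  have "(\<Sum>k\<in>dyadic_scales n K. 2 * exp (level k) / 2 ^ k) \<le> (\<Sum>k=k0..n. 2 * q ^ k)"
    unfolding term_eq k0_def using q dyadic_scales_subset[OF assms] by (intro sum_mono2) auto
  also have "\<dots> \<le> 2 * (q ^ k0 / (1 - q))"
    using q by (auto simp: sum_distrib_left[symmetric] sum_gp intro!: mult_left_mono divide_right_mono)
  also have "\<dots> = (2 / (1 - q)) * q ^ k0"
    by simp
  also have "\<dots> \<le> 8 * q ^ k0"
    using q by (intro mult_right_mono) (auto simp: field_simps)
  also have "q ^ k0 \<le> sqrt (2 / K)"
  proof -
    have "K < 2 * 2 ^ k0"
      unfolding k0_def by (rule floor_log_exp2_gt)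
    then have "real K \<le> 2 * 2 ^ k0"
      by (metis less_imp_le of_nat_le_iff of_nat_mult of_nat_numeral of_nat_power)
    then have "1 / 2 ^ k0 \<le> 2 / real K"
      using assms by (simp add: field_simps)
    moreover have "q ^ k0 = sqrt (1 / 2 ^ k0)"
      by (simp add: q_def real_sqrt_power power_one_over real_sqrt_divide)
    ultimately show ?thesis
      by simp
  qed
  finally show ?thesis
    by simp
qed

lemma sum_inverse_mult_pred:
  assumes "1 \<le> K" "K \<le> n"
  shows "(\<Sum>j\<in>{K<..n}. 1 / (real j * (real j - 1))) = 1 / real K - 1 / real n"
  using assms(2)
proof (induction n)
  case (Suc n)
  show ?case
  proof (cases "K = Suc n")
    case False
    then have "K \<le> n" "{K<..Suc n} = insert (Suc n) {K<..n}"
      using Suc.prems by auto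
    moreover have "1 / (real (Suc n) * real n) = 1 / real n - 1 / real (Suc n)"
      using \<open>K \<le> n\<close> assms(1) by (simp add: field_simps)
    ultimately show ?thesis
      using Suc.IH by simp
  qed simp
qed (use assms in simp)

lemma sum_pairs_beyond_le:
  assumes "1 \<le> K" "\<And>j. K < j \<Longrightarrow> f j \<le> 1 / real j ^ 3"
  shows "(\<Sum>(i, j)\<in>{(i, j)\<in>pairs n. K < j}. f j) \<le> 1 / real K"
proof -
  have "(\<Sum>(i, j)\<in>{(i, j)\<in>pairs n. K < j}. f j) = (\<Sum>(j, i)\<in>(SIGMA j:{K<..n}. {1..<j}). f j)"
    by (rule sum.reindex_bij_witness[of _ prod.swap prod.swap]) (auto simp: pairs_def)
  also have "\<dots> = (\<Sum>j\<in>{K<..n}. (real j - 1) * f j)"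
    by (subst sum.Sigma[symmetric]) auto
  also have "\<dots> \<le> (\<Sum>j\<in>{K<..n}. 1 / (real j * (real j - 1)))"
  proof (rule sum_mono)
    fix j
    assume "j \<in> {K<..n}"
    then have j: "K < j" "2 \<le> real j"
      using assms(1) by auto
    have "(real j - 1) * f j \<le> (real j - 1) * (1 / real j ^ 3)"
      using assms(2)[OF j(1)] j(2) by (intro mult_left_mono) auto
    also have "\<dots> \<le> 1 / (real j * (real j - 1))"
    proof -
      have "(real j - 1) * (real j - 1) \<le> real j * real j"
        using j(2) by (intro mult_mono) auto
      then show ?thesis
        using j(2) by (simp add: field_simps power3_eq_cube)
    qed
    finally show "(real j - 1) * f j \<le> 1 / (real j * (real j - 1))" .
  qed
  also have "\<dots> \<le> 1 / real K"
    using sum_inverse_mult_pred[OF assms(1)] by (cases "K \<le> n") auto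
  finally show ?thesis .
qed

definition noise_threshold :: "real \<Rightarrow> real \<Rightarrow> real \<Rightarrow> nat \<Rightarrow> real" where
  "noise_threshold c a y j = (level (floor_log j) - a) / (sqrt 2 * c) - y"

lemma level_floor_log_ge:
  assumes "0 < j"
  shows "(ln (real j) - ln 2) / 2 \<le> level (floor_log j)"
proof -
  have "real j < 2 ^ (floor_log j + 1)"
    using floor_log_exp2_gt[of j] by (metis Suc_eq_plus1 of_nat_less_iff of_nat_numeral of_nat_power power_Suc)
  then have "ln (real j) < ln (2 ^ (floor_log j + 1))"
    using assms by (subst ln_less_cancel_iff) auto
  also have "\<dots> = real (floor_log j + 1) * ln 2"
    by (rule ln_realpow)
  finally have "ln (real j) < real (floor_log j + 1) * ln 2" .
  then show ?thesis
    by (simp add: level_def algebra_simps)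
qed

lemma eventually_normal_tail_noise_threshold_le:
  assumes "0 < c"
  shows "eventually (\<lambda>j. normal_tail (noise_threshold c a y j) \<le> 1 / real j ^ 3) sequentially"
proof -
  define \<alpha> where "\<alpha> = 1 / (2 * sqrt 2 * c)"
  define \<beta> where "\<beta> = (ln 2 / 2 + a) / (sqrt 2 * c) + y"
  have "0 < \<alpha>"
    using assms by (simp add: \<alpha>_def)
  then have "eventually (\<lambda>j::nat. 1 \<le> \<alpha> * ln (real j) - \<beta>) sequentially"
    and "eventually (\<lambda>j::nat. exp (- (\<alpha> * ln (real j) - \<beta>)\<^sup>2 / 2) \<le> 1 / real j ^ 3) sequentially"
    by real_asymp+
  with eventually_gt_at_top[of 0] show ?thesis
  proof eventually_elim
    case (elim j)
    have "\<alpha> * ln (real j) - \<beta> = ((ln (real j) - ln 2) / 2 - a) / (sqrt 2 * c) - y"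
      using assms by (simp add: \<alpha>_def \<beta>_def field_simps)
    also have "\<dots> \<le> noise_threshold c a y j"
      unfolding noise_threshold_def using level_floor_log_ge[OF elim(1)] assms
      by (intro diff_right_mono divide_right_mono) auto
    finally have "\<alpha> * ln (real j) - \<beta> \<le> noise_threshold c a y j" .
    then have "(\<alpha> * ln (real j) - \<beta>)\<^sup>2 \<le> (noise_threshold c a y j)\<^sup>2"
      using elim(2) by (intro power_mono) auto
    have "normal_tail (noise_threshold c a y j) \<le> exp (- (noise_threshold c a y j)\<^sup>2 / 2)"
      using elim(2) \<open>\<alpha> * ln (real j) - \<beta> \<le> noise_threshold c a y j\<close> by (intro normal_tail_le_exp) auto
    also have "\<dots> \<le> exp (- (\<alpha> * ln (real j) - \<beta>)\<^sup>2 / 2)"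
      using \<open>(\<alpha> * ln (real j) - \<beta>)\<^sup>2 \<le> (noise_threshold c a y j)\<^sup>2\<close> by simp
    also have "\<dots> \<le> 1 / real j ^ 3"
      by (rule elim(3))
    finally show ?case .
  qed
qed

section \<open>Probability estimates\<close>

lemma one_minus_power_le_exp:
  fixes q :: real
  assumes "0 \<le> q" "q \<le> 1"
  shows "(1 - q) ^ m \<le> exp (- (real m * q))"
proof -
  have "(1 - q) ^ m \<le> exp (- q) ^ m"
    using assms exp_ge_add_one_self[of "- q"] by (intro power_mono) auto
  then show ?thesis
    by (simp add: exp_of_nat_mult[symmetric])
qed

lemma borel_measurable_card_greater:
  fixes f :: "nat \<Rightarrow> 'a \<Rightarrow> real"
  assumes "finite A" "\<And>l. l \<in> A \<Longrightarrow> f l \<in> borel_measurable M"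
  shows "(\<lambda>\<omega>. real (card {l\<in>A. t < f l \<omega>})) \<in> borel_measurable M"
proof -
  have "(\<lambda>\<omega>. \<Sum>l\<in>A. if t < f l \<omega> then 1 else 0 :: real) \<in> borel_measurable M"
    using assms(2) by (intro borel_measurable_sum) (measurable, auto intro!: borel_open)
  then show ?thesis
    using assms(1) by (simp add: sum.If_cases Int_def)
qed

lemma borel_measurable_ord_stat:
  assumes "\<And>l. l \<in> {1..n} \<Longrightarrow> f l \<in> borel_measurable M" "1 \<le> k" "k \<le> n"
  shows "(\<lambda>\<omega>. ord_stat (\<lambda>l. f l \<omega>) n k) \<in> borel_measurable M"
  unfolding borel_measurable_iff_greater
proof
  fix t :: real
  have "{\<omega>\<in>space M. t < ord_stat (\<lambda>l. f l \<omega>) n k}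
      = {\<omega>\<in>space M. real k \<le> real (card {l\<in>{1..n}. t < f l \<omega>})}"
    using less_ord_stat_iff[OF assms(2,3)] by auto
  also have "\<dots> \<in> sets M"
    using borel_measurable_card_greater[of "{1..n}" f M t] assms(1) by measurable
  finally show "{\<omega>\<in>space M. t < ord_stat (\<lambda>l. f l \<omega>) n k} \<in> sets M" .
qed

lemma sets_Collect_argmax_in:
  assumes "\<And>i j. (i, j) \<in> pairs n \<Longrightarrow> W i j \<in> borel_measurable M"
  shows "{\<omega>\<in>space M. argmax_in (\<lambda>i j. W i j \<omega>) n K} \<in> sets M"
proof -
  have "{\<omega>\<in>space M. argmax_in (\<lambda>i j. W i j \<omega>) n K}
      = {\<omega>\<in>space M. \<forall>p\<in>pairs n. K < snd p \<longrightarrow>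
           (\<exists>q\<in>pairs n. W (fst p) (snd p) \<omega> < W (fst q) (snd q) \<omega>)}"
    by (simp add: argmax_in_iff case_prod_beta)
  also have "\<dots> \<in> sets M"
  proof (intro sets.sets_Collect_finite_All sets.sets_Collect_imp sets.sets_Collect_finite_Ex
      sets.sets_Collect_const finite_pairs)
    fix p q
    assume "p \<in> pairs n" "q \<in> pairs n"
    then show "{\<omega>\<in>space M. W (fst p) (snd p) \<omega> < W (fst q) (snd q) \<omega>} \<in> sets M"
      by (intro borel_measurable_less assms) auto
  qed
  finally show ?thesis .
qed

context prob_space
begin

lemma prob_normal_greater:
  assumes "distributed M lborel V std_normal_density"
  shows "prob {\<omega>\<in>space M. t < V \<omega>} = normal_tail t"
proof -
  have "{\<omega>\<in>space M. t < V \<omega>} = V -` {t<..} \<inter> space M"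
    by auto
  then have "ennreal (prob {\<omega>\<in>space M. t < V \<omega>}) = ennreal (normal_tail t)"
    using distributed_emeasure[OF assms, of "{t<..}"] by (simp add: emeasure_eq_measure ennreal_normal_tail)
  then show ?thesis
    by (simp add: normal_tail_nonneg)
qed

lemma prob_normal_less_neg:
  assumes "distributed M lborel V std_normal_density"
  shows "prob {\<omega>\<in>space M. V \<omega> < - t} = normal_tail t"
proof -
  have "distributed M lborel (\<lambda>\<omega>. 0 + - 1 * V \<omega>) (normal_density (0 + - 1 * 0) (\<bar>- 1\<bar> * 1))"
    using assms by (intro normal_density_affine) auto
  then have "distributed M lborel (\<lambda>\<omega>. - V \<omega>) std_normal_density"
    by simp
  moreover have "{\<omega>\<in>space M. V \<omega> < - t} = {\<omega>\<in>space M. t < - V \<omega>}"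
    by auto
  ultimately show ?thesis
    by (simp add: prob_normal_greater)
qed

lemma prob_card_normal_greater_ge:
  assumes "finite A" "\<And>l. l \<in> A \<Longrightarrow> distributed M lborel (V l) std_normal_density" "0 < k"
  shows "prob {\<omega>\<in>space M. k \<le> real (card {l\<in>A. t < V l \<omega>})} \<le> real (card A) * normal_tail t / k"
proof -
  define E where "E l = {\<omega>\<in>space M. t < V l \<omega>}" for l
  have E: "E l \<in> events" if "l \<in> A" for l
    using distributed_measurable[OF assms(2)[OF that]] unfolding E_def by measurable
  define count where "count \<omega> = (\<Sum>l\<in>A. indicator (E l) \<omega> :: real)" for \<omega>
  have "real (card {l\<in>A. t < V l \<omega>}) = count \<omega>" if "\<omega> \<in> space M" for \<omega>
    using assms(1) that by (simp add: count_def E_def indicator_def sum.If_cases Int_def)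
  then have "prob {\<omega>\<in>space M. k \<le> real (card {l\<in>A. t < V l \<omega>})} = prob {\<omega>\<in>space M. k \<le> count \<omega>}"
    by (metis (mono_tags, lifting))
  also have "\<dots> \<le> expectation count / k"
    using E assms(3) unfolding count_def
    by (intro integral_Markov_inequality_measure[where A = "space M"])
       (auto intro!: AE_I2 sum_nonneg simp: emeasure_eq_measure)
  also have "expectation count = (\<Sum>l\<in>A. prob (E l))"
    using E unfolding count_def by (simp add: emeasure_eq_measure)
  also have "\<dots> = real (card A) * normal_tail t"
    using assms(2) by (simp add: E_def prob_normal_greater)
  finally show ?thesis .
qed

end

locale gaussian_pair_scores = prob_space +
  fixes X :: "nat \<Rightarrow> 'a \<Rightarrow> real" and Y :: "nat \<Rightarrow> nat \<Rightarrow> 'a \<Rightarrow> real" and c :: real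
  assumes X_normal: "\<And>i. 1 \<le> i \<Longrightarrow> distributed M lborel (X i) std_normal_density"
    and Y_normal: "\<And>i j. 1 \<le> i \<Longrightarrow> i < j \<Longrightarrow> distributed M lborel (Y i j) std_normal_density"
    and indep: "indep_vars (\<lambda>_. borel) (\<lambda>k. case k of Inl i \<Rightarrow> X i | Inr (i, j) \<Rightarrow> Y i j)
                  (Inl ` {i. 1 \<le> i} \<union> Inr ` {(i, j). 1 \<le> i \<and> i < j})"
    and c_pos: "0 < c"
begin

definition argmax_event :: "nat \<Rightarrow> nat \<Rightarrow> 'a set" where
  "argmax_event n K = {\<omega> \<in> space M.
     argmax_in (\<lambda>i j. (ord_stat (\<lambda>l. cn n * (X l \<omega> - dn n)) n i
                      + ord_stat (\<lambda>l. cn n * (X l \<omega> - dn n)) n j) / sqrt 2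
                     + c * Y i j \<omega>) n K}"

lemma X_measurable: "1 \<le> l \<Longrightarrow> X l \<in> borel_measurable M"
  using distributed_measurable[OF X_normal] by simp

lemma Y_measurable: "1 \<le> i \<Longrightarrow> i < j \<Longrightarrow> Y i j \<in> borel_measurable M"
  using distributed_measurable[OF Y_normal] by simp

lemma sets_argmax_event: "argmax_event n K \<in> events"
  unfolding argmax_event_def
proof (rule sets_Collect_argmax_in)
  fix i j
  assume "(i, j) \<in> pairs n"
  then have ij: "1 \<le> i" "i < j" "j \<le> n"
    by (auto simp: pairs_def)
  have "(\<lambda>\<omega>. cn n * (X l \<omega> - dn n)) \<in> borel_measurable M" if "l \<in> {1..n}" for l
  proof -
    have "X l \<in> borel_measurable M"
      using that by (intro X_measurable) simp
    then show ?thesis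
      by measurable
  qed
  then have ord: "(\<lambda>\<omega>. ord_stat (\<lambda>l. cn n * (X l \<omega> - dn n)) n k) \<in> borel_measurable M"
    if "1 \<le> k" "k \<le> n" for k
    using that by (intro borel_measurable_ord_stat)
  from ij have "1 \<le> j" "i \<le> n"
    by simp_all
  with ord[of i] ord[of j] ij Y_measurable[OF ij(1,2)]
  show "(\<lambda>\<omega>. (ord_stat (\<lambda>l. cn n * (X l \<omega> - dn n)) n i
              + ord_stat (\<lambda>l. cn n * (X l \<omega> - dn n)) n j) / sqrt 2 + c * Y i j \<omega>) \<in> borel_measurable M"
    by measurable
qed

lemma prob_all_X_le:
  assumes "finite S" "S \<noteq> {}" "S \<subseteq> {1..}"
  shows "prob {\<omega>\<in>space M. \<forall>l\<in>S. X l \<omega> \<le> t} = (1 - normal_tail t) ^ card S"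
proof -
  let ?F = "\<lambda>k. case k of Inl i \<Rightarrow> X i | Inr (i, j) \<Rightarrow> Y i j"
  have "{\<omega>\<in>space M. \<forall>l\<in>S. X l \<omega> \<le> t} = (\<Inter>k\<in>Inl ` S. ?F k -` {..t} \<inter> space M)"
    using assms(2) by auto
  also have "prob \<dots> = (\<Prod>k\<in>Inl ` S. prob (?F k -` {..t} \<inter> space M))"
    using assms by (intro indep_varsD[OF indep]) auto
  also have "\<dots> = (\<Prod>l\<in>S. prob (space M - {\<omega>\<in>space M. t < X l \<omega>}))"
    by (subst prod.reindex) (auto intro!: prod.cong arg_cong[where f = prob])
  also have "\<dots> = (\<Prod>l\<in>S. 1 - normal_tail t)"
    using assms(3) X_measurable X_normal
    by (intro prod.cong refl) (auto simp: prob_compl prob_normal_greater)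
  finally show ?thesis
    by simp
qed

lemma prob_card_X_greater_less_2:
  assumes "2 \<le> n"
  shows "prob {\<omega>\<in>space M. card {l\<in>{1..n}. t < X l \<omega>} < 2} \<le> 2 * exp (- real n * normal_tail t / 3)"
proof -
  define m where "m = n div 2"
  define below where "below S = {\<omega>\<in>space M. \<forall>l\<in>S. X l \<omega> \<le> t}" for S
  have "1 \<le> m" "n \<le> 3 * m" "2 * m \<le> n"
    using assms unfolding m_def by presburger+
  then have m: "1 \<le> m" "real n / 3 \<le> real m" "2 * m \<le> n"
    by simp_all
  have "{\<omega>\<in>space M. card {l\<in>{1..n}. t < X l \<omega>} < 2} \<subseteq> below {1..m} \<union> below {m+1..2*m}"
  proof (rule subsetI, rule ccontr)
    fix \<omega>
    assume \<omega>: "\<omega> \<in> {\<omega>\<in>space M. card {l\<in>{1..n}. t < X l \<omega>} < 2}"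
      and "\<omega> \<notin> below {1..m} \<union> below {m+1..2*m}"
    then obtain l1 l2 where "l1 \<in> {1..m}" "l2 \<in> {m+1..2*m}" "t < X l1 \<omega>" "t < X l2 \<omega>"
      by (auto simp: below_def not_le)
    then have "{l1, l2} \<subseteq> {l\<in>{1..n}. t < X l \<omega>}" "l1 \<noteq> l2"
      using m(3) by auto
    then have "2 \<le> card {l\<in>{1..n}. t < X l \<omega>}"
      using card_mono[of "{l\<in>{1..n}. t < X l \<omega>}" "{l1, l2}"] by simp
    with \<omega> show False
      by simp
  qed
  moreover have "below S \<in> events" if "S \<subseteq> {1..}" "finite S" for S
    unfolding below_def using that X_measurable by (intro sets.sets_Collect_finite_All) auto
  ultimately have "prob {\<omega>\<in>space M. card {l\<in>{1..n}. t < X l \<omega>} < 2}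
      \<le> prob (below {1..m}) + prob (below {m+1..2*m})"
    by (intro order.trans[OF finite_measure_mono measure_Un_le]) auto
  also have "\<dots> = 2 * (1 - normal_tail t) ^ m"
    using m by (simp add: below_def prob_all_X_le)
  also have "(1 - normal_tail t) ^ m \<le> exp (- real n * normal_tail t / 3)"
  proof -
    have "normal_tail t \<le> 1"
      using prob_normal_greater[OF X_normal[of 1]] by (metis order_refl prob_le_1)
    with normal_tail_nonneg have "(1 - normal_tail t) ^ m \<le> exp (- (real m * normal_tail t))"
      by (rule one_minus_power_le_exp)
    also have "\<dots> \<le> exp (- real n * normal_tail t / 3)"
      using mult_right_mono[OF m(2) normal_tail_nonneg[of t]] by simp
    finally show ?thesis .
  qed
  finally show ?thesis
    by simp
qed

lemma argmax_eventI:
  assumes "\<omega> \<in> space M" "2 \<le> n"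
    and "2 \<le> card {l\<in>{1..n}. dn n - a / cn n < X l \<omega>}"
    and "\<And>k. k \<in> dyadic_scales n K \<Longrightarrow> card {l\<in>{1..n}. dn n - level k / cn n < X l \<omega>} < 2 ^ k"
    and "- y \<le> Y 1 2 \<omega>"
    and "\<And>i j. (i, j) \<in> pairs n \<Longrightarrow> K < j \<Longrightarrow> Y i j \<omega> \<le> noise_threshold c a y j"
  shows "\<omega> \<in> argmax_event n K"
proof -
  have "0 < cn n"
    using assms(2) by (intro cn_pos) simp
  then have greater_iff: "- t < cn n * (X l \<omega> - dn n) \<longleftrightarrow> dn n - t / cn n < X l \<omega>" for t l
    by (simp add: field_simps)
  have "c * Y i j \<omega> \<le> c * Y 1 2 \<omega> + (level (floor_log j) - a) / sqrt 2"
    if "(i, j) \<in> pairs n" "K < j" for i j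
  proof -
    have "c * Y i j \<omega> \<le> c * noise_threshold c a y j"
      using assms(6)[OF that] c_pos by simp
    also have "\<dots> = (level (floor_log j) - a) / sqrt 2 - c * y"
      using c_pos by (simp add: noise_threshold_def field_simps)
    also have "\<dots> \<le> c * Y 1 2 \<omega> + (level (floor_log j) - a) / sqrt 2"
      using mult_left_mono[OF assms(5), of c] c_pos by simp
    finally show ?thesis .
  qed
  then show ?thesis
    using assms unfolding argmax_event_def greater_iff[symmetric]
    by (intro CollectI conjI argmax_in_ord_statI) auto
qed

lemma argmax_event_compl_subset:
  assumes "2 \<le> n"
  shows "space M - argmax_event n K \<subseteq>
      {\<omega>\<in>space M. real (card {l\<in>{1..n}. dn n - a / cn n < X l \<omega>}) < 2}
    \<union> (\<Union>k\<in>dyadic_scales n K.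
         {\<omega>\<in>space M. 2 ^ k \<le> real (card {l\<in>{1..n}. dn n - level k / cn n < X l \<omega>})})
    \<union> {\<omega>\<in>space M. Y 1 2 \<omega> < - y}
    \<union> (\<Union>(i, j)\<in>{(i, j)\<in>pairs n. K < j}. {\<omega>\<in>space M. noise_threshold c a y j < Y i j \<omega>})"
    (is "_ \<subseteq> ?few \<union> ?crowded \<union> ?low \<union> ?loud")
proof
  fix \<omega>
  assume \<omega>: "\<omega> \<in> space M - argmax_event n K"
  show "\<omega> \<in> ?few \<union> ?crowded \<union> ?low \<union> ?loud"
  proof (rule ccontr)
    assume "\<omega> \<notin> ?few \<union> ?crowded \<union> ?low \<union> ?loud"
    then have not_few: "\<omega> \<notin> ?few" and not_crowded: "\<omega> \<notin> ?crowded"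
      and not_low: "\<omega> \<notin> ?low" and not_loud: "\<omega> \<notin> ?loud"
      by simp_all
    have "2 \<le> card {l\<in>{1..n}. dn n - a / cn n < X l \<omega>}" "- y \<le> Y 1 2 \<omega>"
      using \<omega> not_few not_low by (auto simp: not_less)
    moreover have "card {l\<in>{1..n}. dn n - level k / cn n < X l \<omega>} < 2 ^ k" if "k \<in> dyadic_scales n K" for k
      using \<omega> not_crowded that by (auto simp: not_le)
    moreover have "Y i j \<omega> \<le> noise_threshold c a y j" if ij: "(i, j) \<in> pairs n" "K < j" for i j
    proof (rule ccontr)
      assume "\<not> Y i j \<omega> \<le> noise_threshold c a y j"
      then have "\<omega> \<in> ?loud"
        using ij \<omega> by (intro UN_I[of "(i, j)"]) auto
      with not_loud show False
        by contradiction
    qed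
    ultimately have "\<omega> \<in> argmax_event n K"
      using \<omega> assms by (intro argmax_eventI) auto
    with \<omega> show False
      by simp
  qed
qed

lemma prob_compl_argmax_event_le:
  assumes "2 \<le> n"
  shows "1 - prob (argmax_event n K)
      \<le> prob {\<omega>\<in>space M. real (card {l\<in>{1..n}. dn n - a / cn n < X l \<omega>}) < 2}
       + (\<Sum>k\<in>dyadic_scales n K.
            prob {\<omega>\<in>space M. 2 ^ k \<le> real (card {l\<in>{1..n}. dn n - level k / cn n < X l \<omega>})})
       + prob {\<omega>\<in>space M. Y 1 2 \<omega> < - y}
       + (\<Sum>(i, j)\<in>{(i, j)\<in>pairs n. K < j}. prob {\<omega>\<in>space M. noise_threshold c a y j < Y i j \<omega>})"
proof -
  define few where "few = {\<omega>\<in>space M. real (card {l\<in>{1..n}. dn n - a / cn n < X l \<omega>}) < 2}"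
  define crowded where
    "crowded k = {\<omega>\<in>space M. 2 ^ k \<le> real (card {l\<in>{1..n}. dn n - level k / cn n < X l \<omega>})}" for k
  define low where "low = {\<omega>\<in>space M. Y 1 2 \<omega> < - y}"
  define loud where "loud = (\<lambda>(i, j). {\<omega>\<in>space M. noise_threshold c a y j < Y i j \<omega>})"
  let ?P = "{(i, j)\<in>pairs n. K < j}" and ?S = "dyadic_scales n K"
  let ?US = "\<Union>k\<in>?S. crowded k" and ?UP = "\<Union>p\<in>?P. loud p"
  have P: "finite ?P"
    by (rule finite_subset[OF _ finite_pairs[of n]]) auto
  have count: "(\<lambda>\<omega>. real (card {l\<in>{1..n}. t < X l \<omega>})) \<in> borel_measurable M" for t
    by (intro borel_measurable_card_greater X_measurable) auto
  have loud: "loud p \<in> events" if "p \<in> ?P" for p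
  proof (cases p)
    case (Pair i j)
    with that have "1 \<le> i" "i < j"
      by (auto simp: pairs_def)
    then show ?thesis
      unfolding loud_def Pair using Y_measurable[of i j] by simp measurable
  qed
  have crowded: "crowded k \<in> events" for k
    unfolding crowded_def using count by measurable
  have events: "few \<in> events" "?US \<in> events" "low \<in> events" "?UP \<in> events"
  proof -
    show "few \<in> events"
      unfolding few_def using count by measurable
    show "low \<in> events"
      unfolding low_def using Y_measurable[of 1 2] by measurable
    show "?US \<in> events" "?UP \<in> events"
      using crowded loud finite_dyadic_scales P by auto
  qed
  have "space M - argmax_event n K \<subseteq> few \<union> ?US \<union> low \<union> ?UP"
    unfolding few_def crowded_def low_def loud_def by (rule argmax_event_compl_subset[OF assms])
  then have "prob (space M - argmax_event n K) \<le> prob (few \<union> ?US \<union> low \<union> ?UP)"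
    using events by (intro finite_measure_mono) auto
  then have "1 - prob (argmax_event n K) \<le> prob (few \<union> ?US \<union> low \<union> ?UP)"
    by (simp add: prob_compl sets_argmax_event)
  also have "\<dots> \<le> prob few + prob ?US + prob low + prob ?UP"
    using measure_Un_le[of "few \<union> ?US \<union> low" M ?UP] measure_Un_le[of "few \<union> ?US" M low]
      measure_Un_le[of few M ?US] events by auto
  also have "\<dots> \<le> prob few + (\<Sum>k\<in>?S. prob (crowded k)) + prob low + (\<Sum>p\<in>?P. prob (loud p))"
    using crowded loud P finite_dyadic_scales by (intro add_mono measure_UNION_le order_refl) auto
  also have "(\<Sum>p\<in>?P. prob (loud p))
      = (\<Sum>(i, j)\<in>?P. prob {\<omega>\<in>space M. noise_threshold c a y j < Y i j \<omega>})"
    by (intro sum.cong) (auto simp: loud_def split: prod.split)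
  finally show ?thesis
    unfolding few_def crowded_def low_def .
qed

lemma prob_argmax_event_ge:
  assumes "2 \<le> n"
  shows "1 - (2 * exp (- real n * normal_tail (dn n - a / cn n) / 3)
            + (\<Sum>k\<in>dyadic_scales n K. real n * normal_tail (dn n - level k / cn n) / 2 ^ k)
            + normal_tail y
            + (\<Sum>(i, j)\<in>{(i, j)\<in>pairs n. K < j}. normal_tail (noise_threshold c a y j)))
         \<le> prob (argmax_event n K)"
proof -
  have "prob {\<omega>\<in>space M. real (card {l\<in>{1..n}. dn n - a / cn n < X l \<omega>}) < 2}
      \<le> 2 * exp (- real n * normal_tail (dn n - a / cn n) / 3)"
    using prob_card_X_greater_less_2[OF assms] by simp
  moreover have "prob {\<omega>\<in>space M. 2 ^ k \<le> real (card {l\<in>{1..n}. dn n - level k / cn n < X l \<omega>})}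
      \<le> real n * normal_tail (dn n - level k / cn n) / 2 ^ k" for k
    using prob_card_normal_greater_ge[of "{1..n}" X "2 ^ k"] X_normal by simp
  moreover have "prob {\<omega>\<in>space M. Y 1 2 \<omega> < - y} = normal_tail y"
    by (rule prob_normal_less_neg[OF Y_normal]) simp_all
  moreover have "prob {\<omega>\<in>space M. noise_threshold c a y j < Y i j \<omega>} = normal_tail (noise_threshold c a y j)"
    if "(i, j) \<in> pairs n" for i j
    using that by (intro prob_normal_greater Y_normal) (auto simp: pairs_def)
  ultimately have "prob {\<omega>\<in>space M. real (card {l\<in>{1..n}. dn n - a / cn n < X l \<omega>}) < 2}
       + (\<Sum>k\<in>dyadic_scales n K.
            prob {\<omega>\<in>space M. 2 ^ k \<le> real (card {l\<in>{1..n}. dn n - level k / cn n < X l \<omega>})})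
       + prob {\<omega>\<in>space M. Y 1 2 \<omega> < - y}
       + (\<Sum>(i, j)\<in>{(i, j)\<in>pairs n. K < j}. prob {\<omega>\<in>space M. noise_threshold c a y j < Y i j \<omega>})
    \<le> 2 * exp (- real n * normal_tail (dn n - a / cn n) / 3)
       + (\<Sum>k\<in>dyadic_scales n K. real n * normal_tail (dn n - level k / cn n) / 2 ^ k)
       + normal_tail y
       + (\<Sum>(i, j)\<in>{(i, j)\<in>pairs n. K < j}. normal_tail (noise_threshold c a y j))"
    by (intro add_mono sum_mono order_refl) (auto simp: split_def)
  with prob_compl_argmax_event_le[OF assms, of K a y] show ?thesis
    by linarith
qed

lemma eventually_prob_argmax_event_ge:
  assumes "0 \<le> a" "1 \<le> K" "\<forall>j>K. normal_tail (noise_threshold c a y j) \<le> 1 / real j ^ 3"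
  shows "eventually (\<lambda>n. 1 - (2 * exp (- exp (a - 7/2) / 3) + 8 * sqrt (2 / K) + normal_tail y + 1 / K)
                          \<le> prob (argmax_event n K)) sequentially"
  using eventually_mult_normal_tail_dn_ge[OF assms(1)] eventually_mult_normal_tail_dn_le
    eventually_ge_at_top[of 2]
proof eventually_elim
  case (elim n)
  have "2 * exp (- real n * normal_tail (dn n - a / cn n) / 3)
        + (\<Sum>k\<in>dyadic_scales n K. real n * normal_tail (dn n - level k / cn n) / 2 ^ k)
        + normal_tail y
        + (\<Sum>(i, j)\<in>{(i, j)\<in>pairs n. K < j}. normal_tail (noise_threshold c a y j))
      \<le> 2 * exp (- exp (a - 7/2) / 3) + 8 * sqrt (2 / K) + normal_tail y + 1 / K"
  proof (intro add_mono order_refl)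
    show "2 * exp (- real n * normal_tail (dn n - a / cn n) / 3) \<le> 2 * exp (- exp (a - 7/2) / 3)"
      using elim(1) by simp
    have "(\<Sum>k\<in>dyadic_scales n K. real n * normal_tail (dn n - level k / cn n) / 2 ^ k)
        \<le> (\<Sum>k\<in>dyadic_scales n K. 2 * exp (level k) / 2 ^ k)"
      using elim(2) level_nonneg level_le_half_ln
      by (intro sum_mono divide_right_mono) (auto simp: dyadic_scales_def)
    also have "\<dots> \<le> 8 * sqrt (2 / K)"
      using assms(2) by (rule sum_dyadic_scales_le)
    finally show "(\<Sum>k\<in>dyadic_scales n K. real n * normal_tail (dn n - level k / cn n) / 2 ^ k)
        \<le> 8 * sqrt (2 / K)" .
    show "(\<Sum>(i, j)\<in>{(i, j)\<in>pairs n. K < j}. normal_tail (noise_threshold c a y j)) \<le> 1 / K"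
      by (rule sum_pairs_beyond_le[OF assms(2)]) (use assms(3) in blast)
  qed
  then show ?case
    using prob_argmax_event_ge[OF elim(3), of a K y] by (rule order.trans[OF diff_left_mono])
qed

lemma liminf_prob_argmax_event_ge:
  assumes "0 \<le> a" "1 \<le> K" "\<forall>j>K. normal_tail (noise_threshold c a y j) \<le> 1 / real j ^ 3"
  shows "ereal (1 - (2 * exp (- exp (a - 7/2) / 3) + 8 * sqrt (2 / K) + normal_tail y + 1 / K))
           \<le> liminf (\<lambda>n. ereal (prob (argmax_event n K)))"
  using eventually_prob_argmax_event_ge[OF assms] by (intro Liminf_bounded) simp

lemma eventually_liminf_prob_argmax_event_ge:
  assumes "0 < \<epsilon>"
  shows "eventually (\<lambda>K. ereal (1 - \<epsilon>) \<le> liminf (\<lambda>n. ereal (prob (argmax_event n K)))) sequentially"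
proof -
  have "((\<lambda>a::real. 2 * exp (- exp (a - 7/2) / 3)) \<longlongrightarrow> 0) at_top"
    by real_asymp
  then have "eventually (\<lambda>a. 0 \<le> a \<and> 2 * exp (- exp (a - 7/2) / 3) < \<epsilon> / 4) at_top"
    using assms by (intro eventually_conj eventually_ge_at_top order_tendstoD(2)) auto
  then obtain a where a: "0 \<le> a" "2 * exp (- exp (a - 7/2) / 3) < \<epsilon> / 4"
    using eventually_happens'[OF trivial_limit_at_top_linorder] by blast
  have "eventually (\<lambda>y. normal_tail y < \<epsilon> / 4) at_top"
    using assms by (intro order_tendstoD(2)[OF normal_tail_tendsto_0]) simp
  then obtain y where y: "normal_tail y < \<epsilon> / 4"
    using eventually_happens'[OF trivial_limit_at_top_linorder] by blast
  have "((\<lambda>K. 8 * sqrt (2 / real K) + 1 / real K) \<longlongrightarrow> 0) sequentially"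
    by real_asymp
  then have "eventually (\<lambda>K. 8 * sqrt (2 / real K) + 1 / real K < \<epsilon> / 2) sequentially"
    using assms by (intro order_tendstoD(2)) auto
  moreover have "eventually (\<lambda>K. \<forall>j\<ge>K. normal_tail (noise_threshold c a y j) \<le> 1 / real j ^ 3) sequentially"
    using eventually_normal_tail_noise_threshold_le[OF c_pos] by (rule eventually_all_ge_at_top)
  moreover have "eventually (\<lambda>K. 1 \<le> K) sequentially"
    by (rule eventually_ge_at_top)
  ultimately show ?thesis
  proof eventually_elim
    case (elim K)
    have "ereal (1 - \<epsilon>) \<le> ereal (1 - (2 * exp (- exp (a - 7/2) / 3) + 8 * sqrt (2 / K) + normal_tail y + 1 / K))"
      using a y elim(1) by simp
    also have "\<dots> \<le> liminf (\<lambda>n. ereal (prob (argmax_event n K)))"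
      using a(1) elim(2,3) by (intro liminf_prob_argmax_event_ge) auto
    finally show ?case .
  qed
qed

end

theorem lemma9p2:
  fixes M :: "'a measure"
    and X :: "nat \<Rightarrow> 'a \<Rightarrow> real"
    and Y :: "nat \<Rightarrow> nat \<Rightarrow> 'a \<Rightarrow> real"
    and c :: real
  assumes "prob_space M"
    and "\<And>i. 1 \<le> i \<Longrightarrow> distributed M lborel (X i) std_normal_density"
    and "\<And>i j. 1 \<le> i \<Longrightarrow> i < j \<Longrightarrow> distributed M lborel (Y i j) std_normal_density"
    and "prob_space.indep_vars M (\<lambda>_. borel)
           (\<lambda>k. case k of Inl i \<Rightarrow> X i | Inr (i, j) \<Rightarrow> Y i j)
           (Inl ` {i. 1 \<le> i} \<union> Inr ` {(i, j). 1 \<le> i \<and> i < j})"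
    and "c > 0"
  shows "\<forall>\<epsilon>>0. \<exists>C>0. \<forall>K::nat. real K \<ge> C \<longrightarrow>
           liminf (\<lambda>n. ereal (measure M {\<omega> \<in> space M.
              argmax_in (\<lambda>i j. (ord_stat (\<lambda>l. cn n * (X l \<omega> - dn n)) n i
                                 + ord_stat (\<lambda>l. cn n * (X l \<omega> - dn n)) n j) / sqrt 2
                                + c * Y i j \<omega>) n K}))
           \<ge> ereal (1 - \<epsilon>)"
proof -
  interpret gaussian_pair_scores M X Y c
    by (intro gaussian_pair_scores.intro gaussian_pair_scores_axioms.intro assms)
  have "\<exists>C>0. \<forall>K::nat. real K \<ge> C \<longrightarrow> liminf (\<lambda>n. ereal (prob (argmax_event n K))) \<ge> ereal (1 - \<epsilon>)"
    if \<epsilon>: "\<epsilon> > 0" for \<epsilon>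
  proof -
    obtain N where "\<And>K. N \<le> K \<Longrightarrow> ereal (1 - \<epsilon>) \<le> liminf (\<lambda>n. ereal (prob (argmax_event n K)))"
      using eventually_liminf_prob_argmax_event_ge[OF \<epsilon>] unfolding eventually_sequentially by blast
    then show ?thesis
      by (intro exI[of _ "max 1 (real N)"]) auto
  qed
  then show ?thesis
    unfolding argmax_event_def by blast
qed

end
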